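(* Let $K$ be a number field and let $\alpha=p/q$ be a positive rational number with $\gcd(p,q)=1$ which is not an integer and is not of the form $1/n$ for an integer $n$. Let $F\in K((x))$ be a Laurent series such that there exist $d\ge 0$ and polynomials $P_0,\dots,P_d\in K[x]$ with $P_d\ne0$ and $\sum_{i=0}^d P_i(x)F(x^{\alpha^i})=0$. Then $F(x^{\alpha^i})$ is a Laurent series (i.e. has support contained in $\mathbb{Z}$ and bounded below) for each $i=0,1,\dots,d$.
   Context: For a Laurent series $F=\sum_i f_ix^i$ and $\gamma>0$, $F(x^\gamma)=\sum_i f_i x^{\gamma i}$, regarded as a Hahn series (formal series with well-ordered support in $\mathbb{R}$); the equation holds in the field of such Hahn series over $K$. *)

theory Defs
  imports Complex_Main "HOL-Computational_Algebra.Polynomial" "HOL-Computational_Algebra.Formal_Laurent_Series"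
begin

definition number_field :: "'a::field_char_0 itself \<Rightarrow> bool" where
  "number_field _ \<longleftrightarrow>
     (\<exists>B::'a set. finite B \<and> (\<forall>x::'a. \<exists>c::'a \<Rightarrow> rat. x = (\<Sum>b\<in>B. of_rat (c b) * b)))"

text \<open>Hahn series over \<open>'a\<close> with real exponents are represented by their coefficient
  functions \<open>real \<Rightarrow> 'a\<close>.  The coefficient of \<open>x^e\<close> in \<open>F(x^\<gamma>) = \<Sum> f_n x^(\<gamma> n)\<close>:\<close>
definition fls_subst_coeff :: "'a::comm_monoid_add fls \<Rightarrow> real \<Rightarrow> real \<Rightarrow> 'a" where
  "fls_subst_coeff F \<gamma> e = (\<Sum>n\<in>{n::int. \<gamma> * of_int n = e}. fls_nth F n)"

definition poly_times_coeff :: "'a::comm_semiring_1 poly \<Rightarrow> (real \<Rightarrow> 'a) \<Rightarrow> real \<Rightarrow> 'a" where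
  "poly_times_coeff P g e = (\<Sum>k\<le>degree P. coeff P k * g (e - real k))"

definition hahn_support :: "(real \<Rightarrow> 'a::zero) \<Rightarrow> real set" where
  "hahn_support g = {e. g e \<noteq> 0}"

definition is_laurent_hahn :: "(real \<Rightarrow> 'a::zero) \<Rightarrow> bool" where
  "is_laurent_hahn g \<longleftrightarrow> hahn_support g \<subseteq> \<int> \<and> bdd_below (hahn_support g)"

end

theory Submission
  imports Defs
begin

text \<open>Write \<open>\<alpha> = p/q\<close> in lowest terms with \<open>q > 1\<close>.  It suffices to show that \<open>q\<^sup>d\<close> divides
  every exponent \<open>n\<close> of \<open>F\<close>, since then \<open>\<alpha>\<^sup>i n = p\<^sup>i q\<^sup>d\<^sup>-\<^sup>i (n / q\<^sup>d)\<close> is an integer.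
  If \<open>q\<^sup>t\<close> divides all exponents but \<open>q\<^sup>t\<^sup>+\<^sup>1\<close> does not, with \<open>t < d\<close>, let \<open>n\<^sub>1\<close> be the least
  exponent not divisible by \<open>q\<^sup>t\<^sup>+\<^sup>1\<close> and \<open>k\<^sub>0\<close> the order of \<open>P\<^sub>d\<close> at \<open>0\<close>.  Clearing denominators
  in \<open>\<alpha>\<^sup>d n\<^sub>1 + k\<^sub>0 = \<alpha>\<^sup>i n + k\<close> shows that \<open>x\<^bsup>\<alpha>\<^sup>d n\<^sub>1 + k\<^sub>0\<^esup>\<close> occurs in \<open>P\<^sub>i(x) F(x\<^bsup>\<alpha>\<^sup>i\<^esup>)\<close> only
  for \<open>i = d\<close> and \<open>k = k\<^sub>0\<close> (where \<open>k\<close> ranges over the degrees of monomials of \<open>P\<^sub>i\<close>), so its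
  coefficient in the functional equation is a nonzero product, a contradiction.\<close>

lemma fls_subst_coeff_nonzeroE:
  assumes "fls_subst_coeff F \<gamma> e \<noteq> 0"
  obtains n where "e = \<gamma> * of_int n" "fls_nth F n \<noteq> 0"
proof -
  from assms obtain n where "n \<in> {n::int. \<gamma> * of_int n = e}" "fls_nth F n \<noteq> 0"
    unfolding fls_subst_coeff_def by (meson sum.not_neutral_contains_not_neutral)
  then show thesis using that by auto
qed

lemma fls_subst_coeff_at_multiple:
  assumes "\<gamma> \<noteq> 0"
  shows "fls_subst_coeff F \<gamma> (\<gamma> * of_int n) = fls_nth F n"
proof -
  have "{m::int. \<gamma> * of_int m = \<gamma> * of_int n} = {n}" using assms by auto
  then show ?thesis unfolding fls_subst_coeff_def by simp
qed

lemma is_laurent_hahn_fls_subst_coeff: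
  assumes "\<gamma> > 0" and "\<And>n. fls_nth F n \<noteq> 0 \<Longrightarrow> \<gamma> * of_int n \<in> \<int>"
  shows "is_laurent_hahn (fls_subst_coeff F \<gamma>)"
  unfolding is_laurent_hahn_def
proof
  show "hahn_support (fls_subst_coeff F \<gamma>) \<subseteq> \<int>"
    using assms(2) by (auto simp: hahn_support_def elim: fls_subst_coeff_nonzeroE)
  show "bdd_below (hahn_support (fls_subst_coeff F \<gamma>))"
  proof (rule bdd_belowI)
    fix e assume "e \<in> hahn_support (fls_subst_coeff F \<gamma>)"
    then obtain n where n: "e = \<gamma> * of_int n" "fls_nth F n \<noteq> 0"
      by (auto simp: hahn_support_def elim: fls_subst_coeff_nonzeroE)
    have "fls_subdegree F \<le> n" using n(2) by (rule fls_subdegree_leI)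
    then show "\<gamma> * of_int (fls_subdegree F) \<le> e" using assms(1) by (simp add: n(1))
  qed
qed

lemma sum_poly_times_coeff_single_term:
  fixes P :: "'i \<Rightarrow> 'a::comm_semiring_1 poly"
  assumes "finite A" "i0 \<in> A" "k0 \<le> degree (P i0)"
    and single: "\<And>i k. i \<in> A \<Longrightarrow> coeff (P i) k \<noteq> 0 \<Longrightarrow> g i (e - real k) \<noteq> 0 \<Longrightarrow> i = i0 \<and> k = k0"
  shows "(\<Sum>i\<in>A. poly_times_coeff (P i) (g i) e) = coeff (P i0) k0 * g i0 (e - real k0)"
proof -
  have others: "coeff (P i) k * g i (e - real k) = 0" if "i \<in> A" "(i, k) \<noteq> (i0, k0)" for i k
    using single[of i k] that by (metis mult_not_zero)
  have "poly_times_coeff (P i0) (g i0) e = coeff (P i0) k0 * g i0 (e - real k0)"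
    unfolding poly_times_coeff_def using assms(2,3) others
    by (subst sum.remove[of _ k0]) (auto intro!: sum.neutral)
  moreover have "poly_times_coeff (P i) (g i) e = 0" if "i \<in> A - {i0}" for i
    unfolding poly_times_coeff_def using that others by (auto intro!: sum.neutral)
  ultimately show ?thesis
    using assms(1,2) by (subst sum.remove[of _ i0]) (auto intro!: sum.neutral)
qed

lemma ratio_power_mult_denom_power:
  fixes p q m :: int
  assumes "q \<noteq> 0" "i \<le> d"
  shows "(of_int p / of_int q :: real) ^ i * of_int (q ^ d * m) = of_int (p ^ i * q ^ (d - i) * m)"
proof -
  have "(of_int q :: real) ^ d = of_int q ^ i * of_int q ^ (d - i)"
    using assms(2) by (metis le_add_diff_inverse power_add)
  moreover have "(of_int p / of_int q :: real) ^ i * of_int q ^ i = of_int p ^ i"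
    using assms(1) by (simp add: power_divide)
  ultimately show ?thesis by (simp add: mult.assoc[symmetric])
qed

lemma cleared_exponent_eq:
  fixes p q n m :: int and k l :: nat
  assumes "q \<noteq> 0" "i \<le> d"
    and "(of_int p / of_int q) ^ d * of_int n + real l - real k = (of_int p / of_int q :: real) ^ i * of_int m"
  shows "p ^ i * q ^ (d - i) * m = p ^ d * n + q ^ d * (int l - int k)"
proof -
  let ?\<gamma> = "\<lambda>i. (of_int p / of_int q :: real) ^ i"
  have "real_of_int (p ^ i * q ^ (d - i) * m) = ?\<gamma> i * of_int (q ^ d * m)"
    by (rule ratio_power_mult_denom_power[OF assms(1,2), symmetric])
  also have "\<dots> = of_int q ^ d * (?\<gamma> d * of_int n + real l - real k)"
    using assms(3) by simp
  also have "\<dots> = ?\<gamma> d * of_int (q ^ d * n) + of_int (q ^ d * (int l - int k))"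
    by (simp add: algebra_simps)
  also have "\<dots> = real_of_int (p ^ d * q ^ (d - d) * n) + of_int (q ^ d * (int l - int k))"
    by (simp only: ratio_power_mult_denom_power[OF assms(1) order_refl])
  also have "\<dots> = real_of_int (p ^ d * n + q ^ d * (int l - int k))"
    by simp
  finally show ?thesis by (simp only: of_int_eq_iff)
qed

lemma not_power_dvd_shifted:
  fixes p q n c :: int
  assumes "coprime p q" "Suc t \<le> d" "\<not> q ^ Suc t dvd n"
  shows "\<not> q ^ Suc t dvd p ^ d * n + q ^ d * c"
proof
  assume "q ^ Suc t dvd p ^ d * n + q ^ d * c"
  moreover have "q ^ Suc t dvd q ^ d * c" using assms(2) by (meson dvd_mult2 le_imp_power_dvd)
  ultimately have "q ^ Suc t dvd p ^ d * n" by (simp add: dvd_add_left_iff)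
  moreover have "coprime (q ^ Suc t) (p ^ d)" using assms(1) by (simp add: coprime_commute)
  ultimately show False using assms(3) by (simp add: coprime_dvd_mult_right_iff)
qed

lemma fls_least_exponent_with:
  assumes "fls_nth F n \<noteq> 0" "Q n"
  obtains n1 where "fls_nth F n1 \<noteq> 0" "Q n1" "\<And>m. fls_nth F m \<noteq> 0 \<Longrightarrow> Q m \<Longrightarrow> n1 \<le> m"
proof -
  obtain n1 where n1: "fls_nth F n1 \<noteq> 0 \<and> Q n1"
    and least: "\<forall>m. fls_nth F m \<noteq> 0 \<and> Q m \<longrightarrow> nat (n1 - fls_subdegree F) \<le> nat (m - fls_subdegree F)"
    using ex_has_least_nat[of "\<lambda>n. fls_nth F n \<noteq> 0 \<and> Q n" n "\<lambda>n. nat (n - fls_subdegree F)"] assms by blast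
  have "n1 \<le> m" if "fls_nth F m \<noteq> 0" "Q m" for m
  proof -
    have "nat (n1 - fls_subdegree F) \<le> nat (m - fls_subdegree F)" using least that by blast
    moreover have "fls_subdegree F \<le> n1" "fls_subdegree F \<le> m"
      using n1 that(1) by (auto intro: fls_subdegree_leI)
    ultimately show ?thesis by simp
  qed
  with n1 that show thesis by blast
qed

lemma fls_subst_coeff_isolated_exponent:
  fixes F :: "'a::comm_monoid_add fls" and p q n1 :: int
  assumes "p > 0" "q > 1" "coprime p q" "Suc t \<le> d" "i \<le> d"
    and dvd_t: "\<And>n. fls_nth F n \<noteq> 0 \<Longrightarrow> q ^ t dvd n"
    and "\<not> q ^ Suc t dvd n1"
    and n1_least: "\<And>m. fls_nth F m \<noteq> 0 \<Longrightarrow> \<not> q ^ Suc t dvd m \<Longrightarrow> n1 \<le> m"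
    and "fls_subst_coeff F ((of_int p / of_int q) ^ i)
           ((of_int p / of_int q) ^ d * of_int n1 + real k0 - real k) \<noteq> 0"
  shows "i = d" and "k \<le> k0"
proof -
  obtain m where m: "(of_int p / of_int q) ^ d * of_int n1 + real k0 - real k
      = (of_int p / of_int q) ^ i * of_int m" "fls_nth F m \<noteq> 0"
    using assms(9) by (rule fls_subst_coeff_nonzeroE)
  have cleared: "p ^ i * q ^ (d - i) * m = p ^ d * n1 + q ^ d * (int k0 - int k)"
    using assms(2,5) m(1) by (intro cleared_exponent_eq) auto
  have not_dvd: "\<not> q ^ Suc t dvd p ^ d * n1 + q ^ d * c" for c
    using not_power_dvd_shifted assms(3,4,7) by blast
  show "i = d"
  proof (rule ccontr)
    assume "i \<noteq> d"
    then have "q * q ^ t dvd q ^ (d - i) * m"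
      using assms(5) dvd_t[OF m(2)] by (intro mult_dvd_mono) auto
    then have "q ^ Suc t dvd p ^ i * q ^ (d - i) * m" by (simp add: mult.assoc)
    then show False using cleared not_dvd by simp
  qed
  show "k \<le> k0"
  proof (rule ccontr)
    assume "\<not> k \<le> k0"
    then have "q ^ d * (int k0 - int k) < 0" using assms(2) by (simp add: mult_pos_neg)
    then have "p ^ d * m < p ^ d * n1" using cleared \<open>i = d\<close> by simp
    then have "m < n1" using assms(1) by (simp add: mult_less_cancel_left)
    moreover have "\<not> q ^ Suc t dvd m"
    proof
      assume "q ^ Suc t dvd m"
      then have "q ^ Suc t dvd p ^ d * m" by simp
      then show False using cleared \<open>i = d\<close> not_dvd by simp
    qed
    ultimately show False using n1_least[OF m(2)] by fastforce
  qed
qed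

lemma fls_exponents_power_dvd_step:
  fixes F :: "'a::idom fls" and P :: "nat \<Rightarrow> 'a poly" and p q :: int
  assumes "p > 0" "q > 1" "coprime p q" "P d \<noteq> 0"
    and eq: "\<forall>e::real. (\<Sum>i\<le>d. poly_times_coeff (P i) (fls_subst_coeff F ((of_int p / of_int q) ^ i)) e) = 0"
    and "Suc t \<le> d" and dvd_t: "\<And>n. fls_nth F n \<noteq> 0 \<Longrightarrow> q ^ t dvd n"
    and "fls_nth F n \<noteq> 0"
  shows "q ^ Suc t dvd n"
proof (rule ccontr)
  assume "\<not> q ^ Suc t dvd n"
  then obtain n1 where n1: "fls_nth F n1 \<noteq> 0" "\<not> q ^ Suc t dvd n1"
    and n1_least: "\<And>m. fls_nth F m \<noteq> 0 \<Longrightarrow> \<not> q ^ Suc t dvd m \<Longrightarrow> n1 \<le> m"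
    using fls_least_exponent_with[of F n "\<lambda>n. \<not> q ^ Suc t dvd n"] assms(8) by blast
  define k0 where "k0 = (LEAST k. coeff (P d) k \<noteq> 0)"
  have k0: "coeff (P d) k0 \<noteq> 0"
    unfolding k0_def by (rule LeastI_ex) (use assms(4) leading_coeff_0_iff in blast)
  define \<gamma> where "\<gamma> i = (of_int p / of_int q :: real) ^ i" for i
  define e where "e = \<gamma> d * of_int n1 + real k0"
  have single: "i = d \<and> k = k0"
    if "i \<in> {..d}" "coeff (P i) k \<noteq> 0" "fls_subst_coeff F (\<gamma> i) (e - real k) \<noteq> 0" for i k
  proof -
    have "i = d \<and> k \<le> k0"
      using fls_subst_coeff_isolated_exponent[OF assms(1-3,6) _ dvd_t n1(2) n1_least] that
      by (auto simp: e_def \<gamma>_def)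
    moreover have "k0 \<le> k" if "i = d" unfolding k0_def using that \<open>coeff (P i) k \<noteq> 0\<close>
      by (auto intro: Least_le)
    ultimately show ?thesis by simp
  qed
  have "(\<Sum>i\<le>d. poly_times_coeff (P i) (fls_subst_coeff F (\<gamma> i)) e)
      = coeff (P d) k0 * fls_subst_coeff F (\<gamma> d) (e - real k0)"
    using k0 le_degree single by (intro sum_poly_times_coeff_single_term) auto
  also have "\<dots> = coeff (P d) k0 * fls_nth F n1"
    using assms(1,2) by (simp add: e_def \<gamma>_def fls_subst_coeff_at_multiple)
  finally show False using eq k0 n1(1) by (simp add: \<gamma>_def)
qed

lemma fls_exponents_power_dvd:
  fixes F :: "'a::idom fls" and P :: "nat \<Rightarrow> 'a poly" and p q :: int
  assumes "p > 0" "q > 1" "coprime p q" "P d \<noteq> 0"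
    and "\<forall>e::real. (\<Sum>i\<le>d. poly_times_coeff (P i) (fls_subst_coeff F ((of_int p / of_int q) ^ i)) e) = 0"
    and "fls_nth F n \<noteq> 0"
  shows "q ^ d dvd n"
proof -
  have "t \<le> d \<Longrightarrow> \<forall>n. fls_nth F n \<noteq> 0 \<longrightarrow> q ^ t dvd n" for t
  proof (induction t)
    case (Suc t)
    then show ?case using fls_exponents_power_dvd_step[OF assms(1-5)] by simp
  qed simp
  then show ?thesis using assms(6) by blast
qed

theorem mainTheorem5:
  fixes F :: "'a::field_char_0 fls" and \<alpha> :: rat and d :: nat and P :: "nat \<Rightarrow> 'a poly"
  assumes "number_field TYPE('a)"
    and "\<alpha> > 0" and "\<alpha> \<notin> \<int>" and "\<forall>n::int. \<alpha> \<noteq> 1 / of_int n"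
    and "P d \<noteq> 0"
    and "\<forall>e::real. (\<Sum>i\<le>d. poly_times_coeff (P i) (fls_subst_coeff F (of_rat \<alpha> ^ i)) e) = 0"
  shows "\<forall>i\<le>d. is_laurent_hahn (fls_subst_coeff F (of_rat \<alpha> ^ i))"
proof (intro allI impI)
  fix i assume "i \<le> d"
  obtain p q where pq: "quotient_of \<alpha> = (p, q)" by fastforce
  have \<alpha>: "\<alpha> = of_int p / of_int q" and "q > 0" and "coprime p q"
    using quotient_of_div[OF pq] quotient_of_denom_pos[OF pq] quotient_of_coprime[OF pq] .
  have "p > 0" using assms(2) \<open>q > 0\<close> by (simp add: \<alpha> zero_less_divide_iff)
  have "q > 1" using assms(3) \<open>q > 0\<close> \<alpha> by (cases "q = 1") auto
  have \<alpha>_real: "(of_rat \<alpha> :: real) = of_int p / of_int q" by (simp add: \<alpha> of_rat_divide)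
  have "\<forall>e::real. (\<Sum>i\<le>d. poly_times_coeff (P i) (fls_subst_coeff F ((of_int p / of_int q) ^ i)) e) = 0"
    using assms(6) by (simp add: \<alpha>_real)
  then have q_power_dvd: "q ^ d dvd n" if "fls_nth F n \<noteq> 0" for n
    using fls_exponents_power_dvd \<open>p > 0\<close> \<open>q > 1\<close> \<open>coprime p q\<close> assms(5) that by blast
  have "(of_rat \<alpha> :: real) ^ i * of_int n \<in> \<int>" if nonzero: "fls_nth F n \<noteq> 0" for n
  proof -
    obtain m where "n = q ^ d * m" using q_power_dvd[OF nonzero] by blast
    then have "of_rat \<alpha> ^ i * of_int n = real_of_int (p ^ i * q ^ (d - i) * m)"
      using \<open>q > 0\<close> \<open>i \<le> d\<close> by (simp only: \<alpha>_real ratio_power_mult_denom_power)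
    then show ?thesis by (simp only: Ints_of_int)
  qed
  then show "is_laurent_hahn (fls_subst_coeff F (of_rat \<alpha> ^ i))"
    using \<open>p > 0\<close> \<open>q > 0\<close> by (intro is_laurent_hahn_fls_subst_coeff) (auto simp: \<alpha>_real)
qed

end
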